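(* Let $1<q\le\infty$, let $X$ be an $\mathcal L_2$-space and $Y$ a Banach space. Then every almost summing operator $u:X\to Y$ is Cohen strongly $q$-summing; that is, $\Pi_{al.s}(X,Y)\subseteq\mathcal D_q(X,Y)$.
   Context: $r_i$ denote the Rademacher functions. For $1\le s\le\infty$, $\|(x_i)_{i=1}^m\|_{w,s}:=\sup_{x^*\in B_{E^*}}\|(x^*(x_i))_{i=1}^m\|_s$. An operator $u\in\mathcal L(X,Y)$ is almost summing ($u\in\Pi_{al.s}(X,Y)$) if there is $C\ge0$ with $\left(\int_0^1\left\|\sum_{i=1}^m r_i(t)u(x_i)\right\|^2dt\right)^{1/2}\le C\|(x_i)_{i=1}^m\|_{w,2}$ for all $m$ and $x_1,\dots,x_m\in X$. $u$ is Cohen strongly $q$-summing ($u\in\mathcal D_q(X,Y)$) if there is $C\ge0$ with $\sum_{i=1}^m|y_i^*(u(x_i))|\le C(\sum_{i=1}^m\|x_i\|^q)^{1/q}\,\|(y_i^* )_{i=1}^m\|_{w,q^*}$ for all finite families $x_i\in X$, $y_i^*\in Y^*$, where $\frac1q+\frac1{q^*}=1$. A Banach space $X$ is an $\mathcal L_2$-space if there is $\lambda>1$ such that every finite-dimensional subspace $E$ of $X$ is contained in a finite-dimensional subspace $F$ of $X$ admitting an isomorphism $v:F\to\ell_2^{\dim F}$ with $\|v\|\|v^{-1}\|\le\lambda$. *)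

theory Defs
  imports "HOL-Analysis.Analysis"
begin

text \<open>Real scalars throughout. Exponents live in ereal so that the value infinity is allowed.\<close>

definition rademacher :: "nat \<Rightarrow> real \<Rightarrow> real" where
  "rademacher i t = sgn (sin (2 ^ i * pi * t))"

definition lpnorm :: "ereal \<Rightarrow> nat \<Rightarrow> (nat \<Rightarrow> real) \<Rightarrow> real" where
  "lpnorm p m a = (if p = \<infinity> then (if m = 0 then 0 else Max ((\<lambda>i. \<bar>a i\<bar>) ` {..<m}))
                   else (\<Sum>i<m. \<bar>a i\<bar> powr real_of_ereal p) powr (1 / real_of_ereal p))"

definition conj_exp :: "ereal \<Rightarrow> ereal" where
  "conj_exp q = (if q = \<infinity> then 1 else ereal (real_of_ereal q / (real_of_ereal q - 1)))"

definition weak_norm :: "ereal \<Rightarrow> nat \<Rightarrow> (nat \<Rightarrow> 'e::real_normed_vector) \<Rightarrow> real" where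
  "weak_norm s m x = (SUP f \<in> {f :: 'e \<Rightarrow>\<^sub>L real. norm f \<le> 1}. lpnorm s m (\<lambda>i. blinfun_apply f (x i)))"

definition almost_summing :: "('a::real_normed_vector \<Rightarrow> 'b::real_normed_vector) \<Rightarrow> bool" where
  "almost_summing u \<longleftrightarrow> bounded_linear u \<and>
     (\<exists>C\<ge>0. \<forall>m (x :: nat \<Rightarrow> 'a).
        sqrt (integral {0..1} (\<lambda>t. (norm (\<Sum>i\<in>{1..m}. rademacher i t *\<^sub>R u (x i)))\<^sup>2))
          \<le> C * weak_norm 2 m (\<lambda>j. x (j + 1)))"

definition cohen_strongly_summing :: "ereal \<Rightarrow> ('a::real_normed_vector \<Rightarrow> 'b::real_normed_vector) \<Rightarrow> bool" where
  "cohen_strongly_summing q u \<longleftrightarrow> bounded_linear u \<and>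
     (\<exists>C\<ge>0. \<forall>m (x :: nat \<Rightarrow> 'a) (y :: nat \<Rightarrow> ('b \<Rightarrow>\<^sub>L real)).
        (\<Sum>i<m. \<bar>blinfun_apply (y i) (u (x i))\<bar>)
          \<le> C * lpnorm q m (\<lambda>i. norm (x i)) * weak_norm (conj_exp q) m y)"

text \<open>Euclidean norm of the first n coordinates (the space l_2^n is modelled as functions
  nat \<Rightarrow> real vanishing from n on).\<close>
definition l2n :: "nat \<Rightarrow> (nat \<Rightarrow> real) \<Rightarrow> real" where
  "l2n n y = sqrt (\<Sum>j<n. (y j)\<^sup>2)"

text \<open>F admits an isomorphism v onto l_2^(dim F) with \<parallel>v\<parallel> \<parallel>v^-1\<parallel> \<le> \<lambda>
  (a bounds \<parallel>v\<parallel>, b bounds \<parallel>v^-1\<parallel>).\<close>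
definition l2_isomorphic :: "real \<Rightarrow> 'a::real_normed_vector set \<Rightarrow> bool" where
  "l2_isomorphic lam F \<longleftrightarrow> (\<exists>(v :: 'a \<Rightarrow> nat \<Rightarrow> real) a b.
      (\<forall>x\<in>F. \<forall>y\<in>F. v (x + y) = (\<lambda>j. v x j + v y j)) \<and>
      (\<forall>c. \<forall>x\<in>F. v (c *\<^sub>R x) = (\<lambda>j. c * v x j)) \<and>
      bij_betw v F {y. \<forall>j\<ge>dim F. y j = 0} \<and>
      0 \<le> a \<and> 0 \<le> b \<and> a * b \<le> lam \<and>
      (\<forall>x\<in>F. l2n (dim F) (v x) \<le> a * norm x \<and> norm x \<le> b * l2n (dim F) (v x)))"

definition fin_dim_subspace :: "'a::real_vector set \<Rightarrow> bool" where
  "fin_dim_subspace E \<longleftrightarrow> subspace E \<and> (\<exists>B. finite B \<and> E = span B)"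

definition L2_space :: "'a::real_normed_vector set \<Rightarrow> bool" where
  "L2_space X \<longleftrightarrow> (\<exists>lam>1. \<forall>E. fin_dim_subspace E \<and> E \<subseteq> X \<longrightarrow>
      (\<exists>F. fin_dim_subspace F \<and> E \<subseteq> F \<and> F \<subseteq> X \<and> l2_isomorphic lam F))"

end

theory Submission
  imports Defs
begin

text \<open>Given \<open>x\<^sub>1, ..., x\<^sub>m\<close>, the \<open>\<L>\<^sub>2\<close> property gives a finite-dimensional
  \<open>F \<supseteq> span {x\<^sub>i}\<close> and an isomorphism \<open>v : F \<rightarrow> l\<^sub>2\<^sup>n\<close> with \<open>\<parallel>v\<parallel> \<parallel>v\<inverse>\<parallel> \<le> \<lambda>\<close>.
  The preimages \<open>e\<^sub>k\<close> of the unit vectors have weak \<open>l\<^sub>2\<close> norm at most \<open>\<parallel>v\<inverse>\<parallel>\<close>.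
  Expanding \<open>x\<^sub>i = \<Sum>\<^sub>k c\<^sub>i\<^sub>k e\<^sub>k\<close>, Cauchy-Schwarz and Khintchine's inequality give
  \<open>|y\<^sub>i(u x\<^sub>i)| \<le> 2 \<parallel>v\<parallel> \<parallel>x\<^sub>i\<parallel> avg |y\<^sub>i(\<Sum>\<^sub>k \<epsilon>\<^sub>k u e\<^sub>k)|\<close>. Summing over \<open>i\<close> and applying
  Hoelder's inequality inside the expectation bounds \<open>\<Sum>\<^sub>i |y\<^sub>i(u x\<^sub>i)|\<close> by
  \<open>2 \<parallel>v\<parallel> \<parallel>(x\<^sub>i)\<parallel>\<^sub>q \<parallel>(y\<^sub>i)\<parallel>\<^sub>w\<^sub>,\<^sub>q\<^sub>* avg \<parallel>\<Sum>\<^sub>k \<epsilon>\<^sub>k u e\<^sub>k\<parallel>\<close>, and the almost summing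
  property bounds the last expectation by \<open>C \<parallel>v\<inverse>\<parallel>\<close>.
  Expectations over \<open>r\<^sub>1, ..., r\<^sub>n\<close> are finite averages over sign vectors, as these
  functions are constant on the dyadic intervals of length \<open>2\<^sup>-\<^sup>n\<close>.\<close>

section \<open>Averages over sign vectors and Khintchine's inequality\<close>

text \<open>The mean of \<open>\<Phi> \<rho>\<close> over the \<open>2\<^sup>n\<close> sign vectors with \<open>\<rho> k \<in> {-1, 1}\<close> for
  \<open>k \<in> {1..n}\<close>; the other coordinates of \<open>\<rho>\<close> are set to \<open>1\<close>.\<close>
primrec sign_avg :: "nat \<Rightarrow> ((nat \<Rightarrow> real) \<Rightarrow> real) \<Rightarrow> real" where
  "sign_avg 0 \<Phi> = \<Phi> (\<lambda>_. 1)"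
| "sign_avg (Suc n) \<Phi> =
     (sign_avg n (\<lambda>\<rho>. \<Phi> (\<rho>(Suc n := 1))) + sign_avg n (\<lambda>\<rho>. \<Phi> (\<rho>(Suc n := -1)))) / 2"

lemma sign_avg_add: "sign_avg n (\<lambda>\<rho>. \<Phi> \<rho> + \<Psi> \<rho>) = sign_avg n \<Phi> + sign_avg n \<Psi>"
  by (induction n arbitrary: \<Phi> \<Psi>) (simp_all add: field_simps)

lemma sign_avg_cmult: "sign_avg n (\<lambda>\<rho>. c * \<Phi> \<rho>) = c * sign_avg n \<Phi>"
  by (induction n arbitrary: \<Phi>) (simp_all add: field_simps)

lemma sign_avg_const: "sign_avg n (\<lambda>\<rho>. c) = c"
  by (induction n) simp_all

lemma sign_avg_divide: "sign_avg n (\<lambda>\<rho>. \<Phi> \<rho> / c) = sign_avg n \<Phi> / c"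
  using sign_avg_cmult[of n "inverse c" \<Phi>] by (simp add: divide_inverse mult.commute)

lemma sign_avg_sum: "finite I \<Longrightarrow> sign_avg n (\<lambda>\<rho>. \<Sum>i\<in>I. f i \<rho>) = (\<Sum>i\<in>I. sign_avg n (f i))"
  by (induction I rule: finite_induct) (simp_all add: sign_avg_add sign_avg_const)

lemma sign_avg_mono: "(\<And>\<rho>. \<Phi> \<rho> \<le> \<Psi> \<rho>) \<Longrightarrow> sign_avg n \<Phi> \<le> sign_avg n \<Psi>"
proof (induction n arbitrary: \<Phi> \<Psi>)
  case (Suc n)
  have "sign_avg n (\<lambda>\<rho>. \<Phi> (\<rho>(Suc n := s))) \<le> sign_avg n (\<lambda>\<rho>. \<Psi> (\<rho>(Suc n := s)))" for s
    by (rule Suc.IH) (rule Suc.prems)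
  from this[of 1] this[of "-1"] show ?case by simp
qed simp

lemma sign_avg_nonneg: "(\<And>\<rho>. 0 \<le> \<Phi> \<rho>) \<Longrightarrow> 0 \<le> sign_avg n \<Phi>"
  using sign_avg_mono[of "\<lambda>_. 0" \<Phi> n] by (simp add: sign_avg_const)

lemma sign_avg_abs_le_sqrt: "sign_avg n (\<lambda>\<rho>. \<bar>\<Phi> \<rho>\<bar>) \<le> sqrt (sign_avg n (\<lambda>\<rho>. (\<Phi> \<rho>)\<^sup>2))"
proof (rule real_le_rsqrt)
  define \<mu> where "\<mu> = sign_avg n (\<lambda>\<rho>. \<bar>\<Phi> \<rho>\<bar>)"
  have "0 \<le> sign_avg n (\<lambda>\<rho>. (\<bar>\<Phi> \<rho>\<bar> - \<mu>)\<^sup>2)"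
    by (rule sign_avg_nonneg) simp
  also have "\<dots> = sign_avg n (\<lambda>\<rho>. (\<Phi> \<rho>)\<^sup>2 + (-2 * \<mu>) * \<bar>\<Phi> \<rho>\<bar> + \<mu>\<^sup>2)"
    by (simp add: power2_eq_square algebra_simps)
  also have "\<dots> = sign_avg n (\<lambda>\<rho>. (\<Phi> \<rho>)\<^sup>2) - \<mu>\<^sup>2"
    by (simp only: sign_avg_add sign_avg_cmult sign_avg_const flip: \<mu>_def) (simp add: power2_eq_square)
  finally show "\<mu>\<^sup>2 \<le> sign_avg n (\<lambda>\<rho>. (\<Phi> \<rho>)\<^sup>2)" by simp
qed

definition signed_sum :: "nat \<Rightarrow> (nat \<Rightarrow> real) \<Rightarrow> (nat \<Rightarrow> real) \<Rightarrow> real" where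
  "signed_sum n a \<rho> = (\<Sum>k\<in>{1..n}. \<rho> k * a k)"

lemma signed_sum_upd: "signed_sum n a (\<rho>(Suc n := s)) = signed_sum n a \<rho>"
  unfolding signed_sum_def by (rule sum.cong) auto

lemma signed_sum_Suc: "signed_sum (Suc n) a \<rho> = signed_sum n a \<rho> + \<rho> (Suc n) * a (Suc n)"
  unfolding signed_sum_def by simp

lemma sign_avg_signed_sum_square: "sign_avg n (\<lambda>\<rho>. (signed_sum n a \<rho>)\<^sup>2) = (\<Sum>k\<in>{1..n}. (a k)\<^sup>2)"
proof (induction n)
  case 0
  then show ?case by (simp add: signed_sum_def)
next
  case (Suc n)
  let ?b = "a (Suc n)"
  have "sign_avg (Suc n) (\<lambda>\<rho>. (signed_sum (Suc n) a \<rho>)\<^sup>2)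
      = (sign_avg n (\<lambda>\<rho>. (signed_sum n a \<rho> + ?b)\<^sup>2) + sign_avg n (\<lambda>\<rho>. (signed_sum n a \<rho> - ?b)\<^sup>2)) / 2"
    by (simp add: signed_sum_Suc signed_sum_upd)
  also have "\<dots> = sign_avg n (\<lambda>\<rho>. ((signed_sum n a \<rho> + ?b)\<^sup>2 + (signed_sum n a \<rho> - ?b)\<^sup>2) / 2)"
    by (simp add: sign_avg_add sign_avg_divide)
  also have "\<dots> = sign_avg n (\<lambda>\<rho>. (signed_sum n a \<rho>)\<^sup>2 + ?b\<^sup>2)"
    by (rule arg_cong[where f = "sign_avg n"]) (simp add: fun_eq_iff power2_eq_square field_simps)
  finally show ?case using Suc by (simp add: sign_avg_add sign_avg_const)
qed

lemma sign_avg_signed_sum_fourth: "sign_avg n (\<lambda>\<rho>. (signed_sum n a \<rho>)^4) \<le> 3 * (\<Sum>k\<in>{1..n}. (a k)\<^sup>2)\<^sup>2"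
proof (induction n)
  case 0
  then show ?case by (simp add: signed_sum_def)
next
  case (Suc n)
  let ?S = "\<lambda>\<rho>. signed_sum n a \<rho>" and ?s = "\<Sum>k\<in>{1..n}. (a k)\<^sup>2" and ?b = "a (Suc n)"
  have "sign_avg (Suc n) (\<lambda>\<rho>. (signed_sum (Suc n) a \<rho>)^4)
      = (sign_avg n (\<lambda>\<rho>. (?S \<rho> + ?b)^4) + sign_avg n (\<lambda>\<rho>. (?S \<rho> - ?b)^4)) / 2"
    by (simp add: signed_sum_Suc signed_sum_upd)
  also have "\<dots> = sign_avg n (\<lambda>\<rho>. ((?S \<rho> + ?b)^4 + (?S \<rho> - ?b)^4) / 2)"
    by (simp add: sign_avg_add sign_avg_divide)
  also have "\<dots> = sign_avg n (\<lambda>\<rho>. (?S \<rho>)^4 + (6 * ?b\<^sup>2) * (?S \<rho>)\<^sup>2 + ?b^4)"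
    by (rule arg_cong[where f = "sign_avg n"]) (simp add: fun_eq_iff power2_eq_square power4_eq_xxxx field_simps)
  also have "\<dots> = sign_avg n (\<lambda>\<rho>. (?S \<rho>)^4) + 6 * ?b\<^sup>2 * ?s + ?b^4"
    by (simp add: sign_avg_add sign_avg_cmult sign_avg_const sign_avg_signed_sum_square)
  also have "\<dots> \<le> 3 * ?s\<^sup>2 + 6 * ?b\<^sup>2 * ?s + 3 * ?b^4"
  proof -
    have "0 \<le> ?b^4" by simp
    then show ?thesis using Suc by linarith
  qed
  also have "\<dots> = 3 * (?s + ?b\<^sup>2)\<^sup>2"
    by (simp add: power2_eq_square power4_eq_xxxx algebra_simps)
  finally show ?case by simp
qed

lemma square_le_abs_plus_fourth:
  fixes s \<sigma> :: real
  assumes "0 < \<sigma>"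
  shows "s\<^sup>2 \<le> (4/3 * \<sigma>) * \<bar>s\<bar> + (1 / (12 * \<sigma>\<^sup>2)) * s^4"
proof -
  have "0 \<le> \<bar>s\<bar> * (\<bar>s\<bar> - 2 * \<sigma>)\<^sup>2 * (\<bar>s\<bar> + 4 * \<sigma>)"
    using assms by simp
  then have "12 * \<sigma>\<^sup>2 * s\<^sup>2 \<le> 16 * \<sigma>^3 * \<bar>s\<bar> + s^4"
    by (simp add: power2_eq_square power3_eq_cube power4_eq_xxxx algebra_simps abs_mult_self_eq)
  then show ?thesis
    using assms by (simp add: field_simps power2_eq_square power3_eq_cube)
qed

text \<open>Littlewood's fourth moment argument: integrate the previous inequality with
  \<open>\<sigma>\<^sup>2\<close> the second moment, and use that the fourth moment is at most \<open>3 \<sigma>\<^sup>4\<close>.\<close>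
lemma khintchine_L1: "L2_set a {1..n} \<le> 2 * sign_avg n (\<lambda>\<rho>. \<bar>signed_sum n a \<rho>\<bar>)"
proof -
  define \<sigma> where "\<sigma> = L2_set a {1..n}"
  define \<mu> where "\<mu> = sign_avg n (\<lambda>\<rho>. \<bar>signed_sum n a \<rho>\<bar>)"
  have \<sigma>2: "\<sigma>\<^sup>2 = (\<Sum>k\<in>{1..n}. (a k)\<^sup>2)"
    unfolding \<sigma>_def L2_set_def by (simp add: sum_nonneg)
  have "\<mu> \<ge> 0" unfolding \<mu>_def by (rule sign_avg_nonneg) simp
  show ?thesis
  proof (cases "\<sigma> > 0")
    case False
    then show ?thesis using \<open>\<mu> \<ge> 0\<close> by (simp add: \<sigma>_def flip: \<mu>_def)
  next
    case True
    have "\<sigma>\<^sup>2 = sign_avg n (\<lambda>\<rho>. (signed_sum n a \<rho>)\<^sup>2)"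
      by (simp add: \<sigma>2 sign_avg_signed_sum_square)
    also have "\<dots> \<le> sign_avg n (\<lambda>\<rho>. (4/3 * \<sigma>) * \<bar>signed_sum n a \<rho>\<bar> + (1 / (12 * \<sigma>\<^sup>2)) * (signed_sum n a \<rho>)^4)"
      by (rule sign_avg_mono) (rule square_le_abs_plus_fourth[OF True])
    also have "\<dots> = (4/3 * \<sigma>) * \<mu> + (1 / (12 * \<sigma>\<^sup>2)) * sign_avg n (\<lambda>\<rho>. (signed_sum n a \<rho>)^4)"
      by (simp only: sign_avg_add sign_avg_cmult \<mu>_def)
    also have "\<dots> \<le> (4/3 * \<sigma>) * \<mu> + (1 / (12 * \<sigma>\<^sup>2)) * (3 * (\<sigma>\<^sup>2)\<^sup>2)"
    proof -
      have "sign_avg n (\<lambda>\<rho>. (signed_sum n a \<rho>)^4) \<le> 3 * (\<sigma>\<^sup>2)\<^sup>2"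
        using sign_avg_signed_sum_fourth[of n a] by (simp only: \<sigma>2)
      then show ?thesis by (intro add_left_mono mult_left_mono) simp_all
    qed
    also have "\<dots> = (4/3 * \<sigma>) * \<mu> + \<sigma>\<^sup>2 / 4"
      using True by (simp add: field_simps power2_eq_square)
    finally have "\<sigma> * \<sigma> \<le> \<sigma> * (16/9 * \<mu>)"
      by (simp add: power2_eq_square)
    then have "\<sigma> \<le> 16/9 * \<mu>" using True by simp
    then show ?thesis using \<open>\<mu> \<ge> 0\<close> by (simp add: \<sigma>_def \<mu>_def)
  qed
qed

section \<open>Integrals against the Rademacher functions\<close>

definition dyadic_signs :: "nat \<Rightarrow> nat \<Rightarrow> nat \<Rightarrow> real" where
  "dyadic_signs n k i = (if even (k div 2 ^ (n - i)) then 1 else -1)"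

lemma rademacher_eq_dyadic_signs:
  assumes i: "i \<in> {1..n}" and t: "real k / 2 ^ n < t" "t < (real k + 1) / 2 ^ n"
  shows "rademacher i t = dyadic_signs n k i"
proof -
  define d :: nat where "d = 2 ^ (n - i)"
  define s where "s = 2 ^ n * t - real k"
  define r where "r = (real (k mod d) + s) / real d"
  have "d > 0" unfolding d_def by simp
  have s: "0 < s" "s < 1"
    using t unfolding s_def by (simp_all add: field_simps)
  have "(2::real) ^ n = 2 ^ i * real d"
    using i unfolding d_def by (simp flip: power_add)
  then have "2 ^ i * t = (real k + s) / real d"
    using \<open>d > 0\<close> unfolding s_def by (simp add: field_simps)
  also have "real k = real (k div d) * real d + real (k mod d)"
    by (simp flip: of_nat_mult of_nat_add)
  finally have "2 ^ i * t = real (k div d) + r"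
    using \<open>d > 0\<close> unfolding r_def by (simp add: field_simps)
  moreover have "real (k mod d) + 1 \<le> real d"
    using mod_less_divisor[OF \<open>d > 0\<close>, of k] by linarith
  then have "0 < r" "r < 1"
    using s \<open>d > 0\<close> unfolding r_def by (simp_all add: field_simps)
  then have "sin (r * pi) > 0"
    by (intro sin_gt_zero) auto
  ultimately have "rademacher i t = sgn ((-1) ^ (k div d) * sin (r * pi))"
    unfolding rademacher_def by (simp add: algebra_simps sin_add)
  then show ?thesis
    using \<open>sin (r * pi) > 0\<close> unfolding dyadic_signs_def d_def by (simp add: sgn_mult)
qed

definition depends_on_signs :: "nat \<Rightarrow> ((nat \<Rightarrow> real) \<Rightarrow> real) \<Rightarrow> bool" where
  "depends_on_signs n \<Phi> \<longleftrightarrow> (\<forall>\<rho> \<rho>'. (\<forall>i\<in>{1..n}. \<rho> i = \<rho>' i) \<longrightarrow> \<Phi> \<rho> = \<Phi> \<rho>')"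

lemma depends_on_signsD: "depends_on_signs n \<Phi> \<Longrightarrow> (\<And>i. i \<in> {1..n} \<Longrightarrow> \<rho> i = \<rho>' i) \<Longrightarrow> \<Phi> \<rho> = \<Phi> \<rho>'"
  unfolding depends_on_signs_def by blast

lemma depends_on_signs_upd:
  assumes "depends_on_signs (Suc n) \<Phi>"
  shows "depends_on_signs n (\<lambda>\<rho>. \<Phi> (\<rho>(Suc n := c)))"
  unfolding depends_on_signs_def
proof (intro allI impI)
  fix \<rho> \<rho>' :: "nat \<Rightarrow> real"
  assume "\<forall>i\<in>{1..n}. \<rho> i = \<rho>' i"
  then show "\<Phi> (\<rho>(Suc n := c)) = \<Phi> (\<rho>'(Suc n := c))"
    by (intro depends_on_signsD[OF assms]) (auto simp: le_Suc_eq)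
qed

lemma has_integral_rademacher_dyadic:
  assumes "depends_on_signs n \<Phi>"
  shows "((\<lambda>t. \<Phi> (\<lambda>i. rademacher i t)) has_integral (\<Sum>k<K. \<Phi> (dyadic_signs n k)) / 2 ^ n) {0..real K / 2 ^ n}"
proof (induction K)
  case 0
  then show ?case using has_integral_refl(2)[of _ 0] by simp
next
  case (Suc K)
  let ?f = "\<lambda>t. \<Phi> (\<lambda>i. rademacher i t)"
  let ?a = "real K / 2 ^ n" and ?b = "(real K + 1) / 2 ^ n"
  have "?a \<le> ?b" by (simp add: divide_right_mono)
  have "(?f has_integral \<Phi> (dyadic_signs n K) / 2 ^ n) {?a..?b}"
  proof (rule has_integral_spike_finite[of "{?a, ?b}"])
    fix t assume "t \<in> {?a..?b} - {?a, ?b}"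
    then have "rademacher i t = dyadic_signs n K i" if "i \<in> {1..n}" for i
      using that by (intro rademacher_eq_dyadic_signs) auto
    then show "?f t = \<Phi> (dyadic_signs n K)"
      by (rule depends_on_signsD[OF assms])
  next
    have "?b - ?a = 1 / 2 ^ n"
      by (simp only: diff_divide_distrib[symmetric] add_diff_cancel_left')
    then show "((\<lambda>t. \<Phi> (dyadic_signs n K)) has_integral \<Phi> (dyadic_signs n K) / 2 ^ n) {?a..?b}"
      using has_integral_const_real[of "\<Phi> (dyadic_signs n K)" ?a ?b] \<open>?a \<le> ?b\<close> by simp
  qed simp
  with Suc have "(?f has_integral (\<Sum>k<K. \<Phi> (dyadic_signs n k)) / 2 ^ n + \<Phi> (dyadic_signs n K) / 2 ^ n) {0..?b}"
    by (intro has_integral_combine[OF _ \<open>?a \<le> ?b\<close>]) simp_all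
  then show ?case
    by (simp only: sum.lessThan_Suc add_divide_distrib of_nat_Suc add.commute[of 1])
qed

lemma sum_dyadic_signs_eq_sign_avg:
  "depends_on_signs n \<Phi> \<Longrightarrow> (\<Sum>k<2 ^ n. \<Phi> (dyadic_signs n k)) / 2 ^ n = sign_avg n \<Phi>"
proof (induction n arbitrary: \<Phi>)
  case 0
  then show ?case unfolding depends_on_signs_def by simp
next
  case (Suc n)
  have dyadic_signs_Suc: "\<Phi> (dyadic_signs (Suc n) k) = \<Phi> ((dyadic_signs n (k div 2))(Suc n := if even k then 1 else -1))" for k
  proof (rule depends_on_signsD[OF Suc.prems])
    fix i assume "i \<in> {1..Suc n}"
    then have "i = Suc n \<or> (i \<le> n \<and> k div 2 ^ (Suc n - i) = k div 2 div 2 ^ (n - i))"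
      by (auto simp: Suc_diff_le div_mult2_eq)
    then show "dyadic_signs (Suc n) k i = ((dyadic_signs n (k div 2))(Suc n := if even k then 1 else -1)) i"
      unfolding dyadic_signs_def by auto
  qed
  have IH: "(\<Sum>k<2 ^ n. \<Phi> ((dyadic_signs n k)(Suc n := c))) / 2 ^ n = sign_avg n (\<lambda>\<rho>. \<Phi> (\<rho>(Suc n := c)))" for c
    by (rule Suc.IH[OF depends_on_signs_upd[OF Suc.prems]])
  have "(\<Sum>k<2 ^ Suc n. \<Phi> (dyadic_signs (Suc n) k))
      = (\<Sum>k<2 ^ n. \<Phi> ((dyadic_signs n k)(Suc n := 1))) + (\<Sum>k<2 ^ n. \<Phi> ((dyadic_signs n k)(Suc n := -1)))"
    using sum_split_even_odd[of "\<lambda>k. \<Phi> (dyadic_signs (Suc n) k)" "\<lambda>k. \<Phi> (dyadic_signs (Suc n) k)" "2 ^ n"]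
    by (simp add: dyadic_signs_Suc)
  then have "(\<Sum>k<2 ^ Suc n. \<Phi> (dyadic_signs (Suc n) k)) / 2 ^ Suc n
      = ((\<Sum>k<2 ^ n. \<Phi> ((dyadic_signs n k)(Suc n := 1))) / 2 ^ n
         + (\<Sum>k<2 ^ n. \<Phi> ((dyadic_signs n k)(Suc n := -1))) / 2 ^ n) / 2"
    by (simp add: add_divide_distrib)
  then show ?case by (simp only: IH sign_avg.simps)
qed

lemma integral_rademacher_eq_sign_avg:
  "depends_on_signs n \<Phi> \<Longrightarrow> integral {0..1} (\<lambda>t. \<Phi> (\<lambda>i. rademacher i t)) = sign_avg n \<Phi>"
  using has_integral_rademacher_dyadic[of n \<Phi> "2 ^ n"] sum_dyadic_signs_eq_sign_avg[of n \<Phi>]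
  by (simp add: integral_unique)

section \<open>Finite \<open>l\<^sub>p\<close> norms and weak norms\<close>

lemma lpnorm_nonneg: "0 \<le> lpnorm p m \<alpha>"
proof (cases "p = \<infinity> \<and> m \<noteq> 0")
  case True
  then have "\<bar>\<alpha> 0\<bar> \<le> Max ((\<lambda>i. \<bar>\<alpha> i\<bar>) ` {..<m})" by (intro Max_ge) auto
  then have "0 \<le> Max ((\<lambda>i. \<bar>\<alpha> i\<bar>) ` {..<m})" by (meson abs_ge_zero order_trans)
  then show ?thesis using True unfolding lpnorm_def by simp
qed (auto simp: lpnorm_def)

lemma lpnorm_two: "lpnorm 2 m \<alpha> = L2_set \<alpha> {..<m}"
  by (simp add: lpnorm_def L2_set_def powr_half_sqrt sum_nonneg)

lemma lpnorm_one: "lpnorm 1 m \<alpha> = (\<Sum>i<m. \<bar>\<alpha> i\<bar>)"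
  by (simp add: lpnorm_def sum_nonneg)

lemma lpnorm_mono:
  assumes "0 < p" and le: "\<And>i. i < m \<Longrightarrow> \<bar>\<alpha> i\<bar> \<le> \<bar>\<beta> i\<bar>"
  shows "lpnorm p m \<alpha> \<le> lpnorm p m \<beta>"
proof (cases p)
  case (real r)
  with \<open>0 < p\<close> have "0 < r" by simp
  have "(\<Sum>i<m. \<bar>\<alpha> i\<bar> powr r) \<le> (\<Sum>i<m. \<bar>\<beta> i\<bar> powr r)"
    using le \<open>0 < r\<close> by (intro sum_mono powr_mono2) auto
  then show ?thesis
    using real \<open>0 < r\<close> by (simp add: lpnorm_def powr_mono2 sum_nonneg)
next
  case PInf
  have "\<bar>\<alpha> i\<bar> \<le> Max ((\<lambda>i. \<bar>\<beta> i\<bar>) ` {..<m})" if "i < m" for i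
  proof -
    have "\<bar>\<beta> i\<bar> \<le> Max ((\<lambda>i. \<bar>\<beta> i\<bar>) ` {..<m})"
      using that by (intro Max_ge) auto
    then show ?thesis using le[OF that] by linarith
  qed
  then have "Max ((\<lambda>i. \<bar>\<alpha> i\<bar>) ` {..<m}) \<le> Max ((\<lambda>i. \<bar>\<beta> i\<bar>) ` {..<m})" if "m \<noteq> 0"
    using that by (subst Max_le_iff) auto
  then show ?thesis using PInf by (simp add: lpnorm_def)
qed (use \<open>0 < p\<close> in simp)

lemma lpnorm_cmult:
  assumes "0 < p" and "0 \<le> c"
  shows "lpnorm p m (\<lambda>i. c * \<alpha> i) = c * lpnorm p m \<alpha>"
proof (cases p)
  case (real r)
  with \<open>0 < p\<close> have "0 < r" by simp
  have "(\<Sum>i<m. \<bar>c * \<alpha> i\<bar> powr r) = c powr r * (\<Sum>i<m. \<bar>\<alpha> i\<bar> powr r)"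
    using \<open>0 \<le> c\<close> by (simp add: abs_mult powr_mult sum_distrib_left)
  moreover have "(c powr r) powr (1 / r) = c"
    using \<open>0 < r\<close> \<open>0 \<le> c\<close> by (simp add: powr_powr)
  ultimately show ?thesis
    using real \<open>0 \<le> c\<close> by (simp add: lpnorm_def powr_mult sum_nonneg)
next
  case PInf
  have "(\<lambda>i. \<bar>c * \<alpha> i\<bar>) ` {..<m} = (\<lambda>z. c * z) ` (\<lambda>i. \<bar>\<alpha> i\<bar>) ` {..<m}"
    using \<open>0 \<le> c\<close> by (auto simp: abs_mult image_image)
  moreover have "Max ((\<lambda>z. c * z) ` (\<lambda>i. \<bar>\<alpha> i\<bar>) ` {..<m}) = c * Max ((\<lambda>i. \<bar>\<alpha> i\<bar>) ` {..<m})" if "m \<noteq> 0"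
    using that \<open>0 \<le> c\<close> by (intro mono_Max_commute[symmetric]) (auto simp: mono_def mult_left_mono)
  ultimately show ?thesis using PInf by (simp add: lpnorm_def)
qed (use \<open>0 < p\<close> in simp)

lemma holder_sum:
  fixes p p' :: real
  assumes "1 < p" "1 < p'" "1 / p + 1 / p' = 1"
  shows "(\<Sum>i\<in>I. \<bar>\<alpha> i\<bar> * \<bar>\<beta> i\<bar>)
    \<le> (\<Sum>i\<in>I. \<bar>\<alpha> i\<bar> powr p) powr (1 / p) * (\<Sum>i\<in>I. \<bar>\<beta> i\<bar> powr p') powr (1 / p')"
proof (cases "finite I")
  case True
  define SA SB where "SA = (\<Sum>i\<in>I. \<bar>\<alpha> i\<bar> powr p)" and "SB = (\<Sum>i\<in>I. \<bar>\<beta> i\<bar> powr p')"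
  define A B where "A = SA powr (1 / p)" and "B = SB powr (1 / p')"
  show ?thesis
  proof (cases "SA = 0 \<or> SB = 0")
    case True
    then have "\<forall>i\<in>I. \<bar>\<alpha> i\<bar> * \<bar>\<beta> i\<bar> = 0"
      using \<open>finite I\<close> by (auto simp: SA_def SB_def sum_nonneg_eq_0_iff)
    then have "(\<Sum>i\<in>I. \<bar>\<alpha> i\<bar> * \<bar>\<beta> i\<bar>) = 0" by (rule sum.neutral)
    then show ?thesis by simp
  next
    case False
    moreover have "0 \<le> SA" "0 \<le> SB"
      unfolding SA_def SB_def by (simp_all add: sum_nonneg)
    ultimately have "0 < SA" "0 < SB" by auto
    then have "0 < A" "0 < B" and "A powr p = SA" "B powr p' = SB"
      using assms by (simp_all add: A_def B_def powr_powr)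
    have young: "(\<bar>\<alpha> i\<bar> / A) * (\<bar>\<beta> i\<bar> / B) \<le> \<bar>\<alpha> i\<bar> powr p / (SA * p) + \<bar>\<beta> i\<bar> powr p' / (SB * p')" for i
    proof -
      have "(\<bar>\<alpha> i\<bar> / A) * (\<bar>\<beta> i\<bar> / B) \<le> (\<bar>\<alpha> i\<bar> / A) powr p / p + (\<bar>\<beta> i\<bar> / B) powr p' / p'"
        using assms \<open>0 < A\<close> \<open>0 < B\<close> by (intro Youngs_inequality) auto
      then show ?thesis
        using \<open>0 < A\<close> \<open>0 < B\<close> \<open>A powr p = SA\<close> \<open>B powr p' = SB\<close> by (simp add: powr_divide field_simps)
    qed
    have "(\<Sum>i\<in>I. \<bar>\<alpha> i\<bar> * \<bar>\<beta> i\<bar>) / (A * B) = (\<Sum>i\<in>I. (\<bar>\<alpha> i\<bar> / A) * (\<bar>\<beta> i\<bar> / B))"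
      by (simp add: sum_divide_distrib)
    also have "\<dots> \<le> (\<Sum>i\<in>I. \<bar>\<alpha> i\<bar> powr p / (SA * p) + \<bar>\<beta> i\<bar> powr p' / (SB * p'))"
      by (intro sum_mono young)
    also have "\<dots> = 1"
      using \<open>0 < SA\<close> \<open>0 < SB\<close> assms
      by (simp add: sum.distrib SA_def SB_def flip: sum_divide_distrib)
    finally have "(\<Sum>i\<in>I. \<bar>\<alpha> i\<bar> * \<bar>\<beta> i\<bar>) \<le> A * B"
      using \<open>0 < A\<close> \<open>0 < B\<close> by (simp add: pos_divide_le_eq)
    then show ?thesis by (simp only: A_def B_def SA_def SB_def)
  qed
qed simp

lemma conj_exp_pos: "1 < q \<Longrightarrow> 0 < conj_exp q"
  by (cases q) (auto simp: conj_exp_def)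

lemma lpnorm_holder:
  assumes "1 < q"
  shows "(\<Sum>i<m. \<bar>\<alpha> i\<bar> * \<bar>\<beta> i\<bar>) \<le> lpnorm q m \<alpha> * lpnorm (conj_exp q) m \<beta>"
proof (cases q)
  case (real Q)
  with assms have "1 < Q" by simp
  moreover have "1 < Q / (Q - 1)" and "1 / Q + 1 / (Q / (Q - 1)) = 1"
    using \<open>1 < Q\<close> by (simp_all add: field_simps)
  ultimately show ?thesis
    using holder_sum[of Q "Q / (Q - 1)"] real by (simp add: lpnorm_def conj_exp_def)
next
  case PInf
  define M where "M = Max ((\<lambda>i. \<bar>\<alpha> i\<bar>) ` {..<m})"
  have "(\<Sum>i<m. \<bar>\<alpha> i\<bar> * \<bar>\<beta> i\<bar>) \<le> (\<Sum>i<m. M * \<bar>\<beta> i\<bar>)"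
    unfolding M_def by (intro sum_mono mult_right_mono Max_ge) auto
  then show ?thesis
    using PInf by (simp add: lpnorm_def lpnorm_one conj_exp_def M_def sum_distrib_left)
qed (use assms in simp)

lemma weak_norm_ge:
  fixes x :: "nat \<Rightarrow> 'e::real_normed_vector" and f :: "'e \<Rightarrow>\<^sub>L real"
  assumes "0 < p" and "norm f \<le> 1"
  shows "lpnorm p m (\<lambda>i. f (x i)) \<le> weak_norm p m x"
  unfolding weak_norm_def
proof (rule cSUP_upper)
  have "lpnorm p m (\<lambda>i. g (x i)) \<le> lpnorm p m (\<lambda>i. norm (x i))" if "norm g \<le> 1" for g :: "'e \<Rightarrow>\<^sub>L real"
  proof (rule lpnorm_mono[OF \<open>0 < p\<close>])
    fix i
    have "\<bar>g (x i)\<bar> \<le> norm g * norm (x i)"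
      using norm_blinfun[of g "x i"] by simp
    also have "\<dots> \<le> norm (x i)"
      using that by (simp add: mult_left_le_one_le)
    finally show "\<bar>g (x i)\<bar> \<le> \<bar>norm (x i)\<bar>" by simp
  qed
  then show "bdd_above ((\<lambda>f :: 'e \<Rightarrow>\<^sub>L real. lpnorm p m (\<lambda>i. f (x i))) ` {f. norm f \<le> 1})"
    by (intro bdd_aboveI2[where M = "lpnorm p m (\<lambda>i. norm (x i))"]) simp
qed (use assms in simp)

lemma weak_norm_le:
  fixes x :: "nat \<Rightarrow> 'e::real_normed_vector"
  assumes "\<And>f :: 'e \<Rightarrow>\<^sub>L real. norm f \<le> 1 \<Longrightarrow> lpnorm p m (\<lambda>i. blinfun_apply f (x i)) \<le> B"
  shows "weak_norm p m x \<le> B"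
  unfolding weak_norm_def
proof (rule cSUP_least)
  have "0 \<in> {f :: 'e \<Rightarrow>\<^sub>L real. norm f \<le> 1}" by simp
  then show "{f :: 'e \<Rightarrow>\<^sub>L real. norm f \<le> 1} \<noteq> {}" by blast
qed (simp add: assms)

lemma weak_norm_nonneg:
  assumes "0 < p"
  shows "0 \<le> weak_norm p m x"
proof -
  have "lpnorm p m (\<lambda>i. blinfun_apply 0 (x i)) \<le> weak_norm p m x"
    by (rule weak_norm_ge[OF assms]) simp
  then show ?thesis by (meson lpnorm_nonneg order_trans)
qed

lemma lpnorm_apply_le_weak_norm:
  fixes x :: "nat \<Rightarrow> 'e::real_normed_vector" and f :: "'e \<Rightarrow>\<^sub>L real"
  assumes "0 < p"
  shows "lpnorm p m (\<lambda>i. f (x i)) \<le> norm f * weak_norm p m x"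
proof (cases "f = 0")
  case True
  then show ?thesis
    using lpnorm_cmult[OF assms order_refl, of m] by simp
next
  case False
  define g where "g = inverse (norm f) *\<^sub>R f"
  have "g z = inverse (norm f) * f z" for z
    by (simp add: g_def blinfun.scaleR_left)
  then have "lpnorm p m (\<lambda>i. g (x i)) = inverse (norm f) * lpnorm p m (\<lambda>i. f (x i))"
    by (simp add: lpnorm_cmult[OF assms])
  then have "lpnorm p m (\<lambda>i. f (x i)) = norm f * lpnorm p m (\<lambda>i. g (x i))"
    using False by simp
  also have "\<dots> \<le> norm f * weak_norm p m x"
    using False by (intro mult_left_mono weak_norm_ge[OF assms]) (simp_all add: g_def)
  finally show ?thesis .
qed

lemma lpnorm_eval_le_weak_norm:
  fixes y :: "nat \<Rightarrow> ('b::real_normed_vector \<Rightarrow>\<^sub>L real)"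
  assumes "0 < p"
  shows "lpnorm p m (\<lambda>i. y i b) \<le> norm b * weak_norm p m y"
proof -
  define ev :: "('b \<Rightarrow>\<^sub>L real) \<Rightarrow>\<^sub>L real" where "ev = blinfun.prod_left b"
  have "norm ev \<le> norm b"
  proof (rule norm_blinfun_bound)
    fix f :: "'b \<Rightarrow>\<^sub>L real"
    show "norm (ev f) \<le> norm b * norm f"
      using norm_blinfun[of f b] by (simp add: ev_def mult.commute)
  qed simp
  have "lpnorm p m (\<lambda>i. y i b) = lpnorm p m (\<lambda>i. ev (y i))"
    by (simp add: ev_def)
  also have "\<dots> \<le> norm ev * weak_norm p m y"
    by (rule lpnorm_apply_le_weak_norm[OF assms])
  also have "\<dots> \<le> norm b * weak_norm p m y"
    by (rule mult_right_mono[OF _ weak_norm_nonneg[OF assms]]) fact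
  finally show ?thesis .
qed

section \<open>Subspaces isomorphic to \<open>l\<^sub>2\<^sup>n\<close>\<close>

lemma linear_on_subspace_sum:
  assumes "subspace F"
    and add: "\<forall>x\<in>F. \<forall>y\<in>F. v (x + y) = (\<lambda>j. v x j + v y j)"
    and scale: "\<forall>c. \<forall>x\<in>F. v (c *\<^sub>R x) = (\<lambda>j. c * v x j)"
    and "finite K" and "\<And>k. k \<in> K \<Longrightarrow> w k \<in> F"
  shows "v (\<Sum>k\<in>K. c k *\<^sub>R w k) = (\<lambda>j. \<Sum>k\<in>K. c k * v (w k) j)"
  using assms(4,5)
proof (induction K rule: finite_induct)
  case empty
  have "v (0 *\<^sub>R 0) = (\<lambda>j. 0 * v 0 j)"
    using scale subspace_0[OF \<open>subspace F\<close>] by blast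
  then show ?case by simp
next
  case (insert k K)
  have "c k *\<^sub>R w k \<in> F" and "(\<Sum>k\<in>K. c k *\<^sub>R w k) \<in> F"
    using insert.prems \<open>subspace F\<close> by (auto intro: subspace_scale subspace_sum)
  then show ?case
    using insert add scale by simp
qed

text \<open>The vector \<open>(\<gamma> 1, ..., \<gamma> n)\<close> of \<open>l\<^sub>2\<^sup>n\<close>, which \<^const>\<open>l2_isomorphic\<close> indexes by \<open>{..<n}\<close>.\<close>
definition to_l2n :: "nat \<Rightarrow> (nat \<Rightarrow> real) \<Rightarrow> nat \<Rightarrow> real" where
  "to_l2n n \<gamma> = (\<lambda>j. if j < n then \<gamma> (Suc j) else 0)"

lemma l2n_to_l2n: "l2n n (to_l2n n \<gamma>) = L2_set \<gamma> {1..n}"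
  by (simp add: l2n_def to_l2n_def L2_set_def sum.atLeast1_atMost_eq)

lemma to_l2n_shift: "(\<forall>j\<ge>n. y j = 0) \<Longrightarrow> to_l2n n (\<lambda>k. y (k - 1)) = y"
  by (auto simp: to_l2n_def)

lemma sum_to_l2n_unit_vectors:
  "(\<lambda>j. \<Sum>k\<in>{1..n}. \<gamma> k * to_l2n n (\<lambda>i. if i = k then 1 else 0) j) = to_l2n n \<gamma>"
proof
  fix j
  have "(\<Sum>k\<in>{1..n}. \<gamma> k * to_l2n n (\<lambda>i. if i = k then 1 else 0) j)
      = (\<Sum>k\<in>{1..n}. if k = Suc j \<and> j < n then \<gamma> k else 0)"
    by (rule sum.cong) (auto simp: to_l2n_def)
  also have "\<dots> = to_l2n n \<gamma> j"
    by (simp add: sum.delta to_l2n_def)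
  finally show "(\<Sum>k\<in>{1..n}. \<gamma> k * to_l2n n (\<lambda>i. if i = k then 1 else 0) j) = to_l2n n \<gamma> j" .
qed

text \<open>The vectors \<open>e k\<close> are the preimages of the unit vectors of \<open>l\<^sub>2\<^sup>n\<close>, and
  \<open>c x k\<close> are the coordinates of \<open>x\<close>; indices run over \<open>{1..n}\<close> as for the Rademacher functions.\<close>
lemma l2_isomorphic_basis:
  fixes F :: "'a::real_normed_vector set"
  assumes "subspace F" and "l2_isomorphic lam F"
  obtains a b :: real and e :: "nat \<Rightarrow> 'a" and c :: "'a \<Rightarrow> nat \<Rightarrow> real" where
    "0 \<le> a" "0 \<le> b" "a * b \<le> lam"
    "\<And>x. x \<in> F \<Longrightarrow> x = (\<Sum>k\<in>{1..dim F}. c x k *\<^sub>R e k)"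
    "\<And>x. x \<in> F \<Longrightarrow> L2_set (c x) {1..dim F} \<le> a * norm x"
    "\<And>\<gamma>. norm (\<Sum>k\<in>{1..dim F}. \<gamma> k *\<^sub>R e k) \<le> b * L2_set \<gamma> {1..dim F}"
proof -
  define n where "n = dim F"
  define T where "T = {y :: nat \<Rightarrow> real. \<forall>j\<ge>n. y j = 0}"
  obtain v :: "'a \<Rightarrow> nat \<Rightarrow> real" and a b where
    add: "\<forall>x\<in>F. \<forall>y\<in>F. v (x + y) = (\<lambda>j. v x j + v y j)" and
    scale: "\<forall>c. \<forall>x\<in>F. v (c *\<^sub>R x) = (\<lambda>j. c * v x j)" and
    bij: "bij_betw v F T" and
    "0 \<le> a" "0 \<le> b" "a * b \<le> lam" and
    bounds: "\<And>x. x \<in> F \<Longrightarrow> l2n n (v x) \<le> a * norm x \<and> norm x \<le> b * l2n n (v x)"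
    using assms(2) unfolding l2_isomorphic_def n_def T_def by blast
  define e where "e k = inv_into F v (to_l2n n (\<lambda>i. if i = k then 1 else 0))" for k
  define c where "c x = (\<lambda>k. v x (k - 1))" for x
  have "to_l2n n (\<lambda>i. if i = k then 1 else 0) \<in> T" for k
    by (simp add: T_def to_l2n_def)
  then have "e k \<in> F" and ve: "v (e k) = to_l2n n (\<lambda>i. if i = k then 1 else 0)" for k
    using bij_betw_imp_surj_on[OF bij] by (auto simp: e_def inv_into_into f_inv_into_f)
  have synthesis_in_F: "(\<Sum>k\<in>{1..n}. \<gamma> k *\<^sub>R e k) \<in> F" for \<gamma>
    by (intro subspace_sum subspace_scale \<open>subspace F\<close> \<open>\<And>k. e k \<in> F\<close>)
  have "v (\<Sum>k\<in>{1..n}. \<gamma> k *\<^sub>R e k) = (\<lambda>j. \<Sum>k\<in>{1..n}. \<gamma> k * v (e k) j)" for \<gamma>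
    by (rule linear_on_subspace_sum[OF assms(1) add scale]) (simp_all add: \<open>\<And>k. e k \<in> F\<close>)
  then have v_synthesis: "v (\<Sum>k\<in>{1..n}. \<gamma> k *\<^sub>R e k) = to_l2n n \<gamma>" for \<gamma>
    by (simp only: ve sum_to_l2n_unit_vectors)
  have v_coords: "v x = to_l2n n (c x)" if "x \<in> F" for x
    unfolding c_def using bij_betw_apply[OF bij that] by (intro to_l2n_shift[symmetric]) (simp add: T_def)
  show ?thesis
  proof
    fix x assume "x \<in> F"
    have "v (\<Sum>k\<in>{1..n}. c x k *\<^sub>R e k) = v x"
      using v_synthesis[of "c x"] v_coords[OF \<open>x \<in> F\<close>] by simp
    then show "x = (\<Sum>k\<in>{1..dim F}. c x k *\<^sub>R e k)"
      using inj_onD[OF bij_betw_imp_inj_on[OF bij]] synthesis_in_F \<open>x \<in> F\<close>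
      unfolding n_def by metis
    show "L2_set (c x) {1..dim F} \<le> a * norm x"
      using bounds[OF \<open>x \<in> F\<close>] v_coords[OF \<open>x \<in> F\<close>] by (simp add: l2n_to_l2n n_def)
  next
    fix \<gamma>
    show "norm (\<Sum>k\<in>{1..dim F}. \<gamma> k *\<^sub>R e k) \<le> b * L2_set \<gamma> {1..dim F}"
      using bounds[OF synthesis_in_F[of \<gamma>]] v_synthesis[of \<gamma>] by (simp add: l2n_to_l2n n_def)
  qed fact+
qed

lemma weak_norm_two_le:
  fixes e :: "nat \<Rightarrow> 'a::real_normed_vector"
  assumes "0 \<le> b" and synthesis: "\<And>\<gamma>. norm (\<Sum>k\<in>{1..n}. \<gamma> k *\<^sub>R e k) \<le> b * L2_set \<gamma> {1..n}"
  shows "weak_norm 2 n (\<lambda>j. e (j + 1)) \<le> b"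
proof (rule weak_norm_le)
  fix f :: "'a \<Rightarrow>\<^sub>L real"
  assume "norm f \<le> 1"
  define \<gamma> where "\<gamma> k = f (e k)" for k
  define S where "S = L2_set \<gamma> {1..n}"
  have "S\<^sup>2 = f (\<Sum>k\<in>{1..n}. \<gamma> k *\<^sub>R e k)"
    by (simp add: S_def L2_set_def sum_nonneg \<gamma>_def blinfun.sum_right blinfun.scaleR_right power2_eq_square)
  also have "\<dots> \<le> norm f * norm (\<Sum>k\<in>{1..n}. \<gamma> k *\<^sub>R e k)"
    using norm_blinfun[of f] abs_le_iff by fastforce
  also have "\<dots> \<le> b * S"
    using \<open>norm f \<le> 1\<close> synthesis[of \<gamma>] unfolding S_def
    by (meson mult_left_le_one_le norm_ge_zero norm_not_less_zero order_trans)
  finally have "S * S \<le> b * S"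
    by (simp add: power2_eq_square)
  have "S \<le> b"
  proof (cases "S = 0")
    case False
    then have "0 < S" by (simp add: S_def order_le_neq_trans)
    with \<open>S * S \<le> b * S\<close> show ?thesis by (rule mult_right_le_imp_le)
  qed (use \<open>0 \<le> b\<close> in simp)
  then show "lpnorm 2 n (\<lambda>j. f (e (j + 1))) \<le> b"
    unfolding lpnorm_two by (simp add: S_def \<gamma>_def L2_set_def sum.atLeast1_atMost_eq)
qed

section \<open>Almost summing operators on \<open>\<L>\<^sub>2\<close>-spaces\<close>

lemma abs_apply_le_sign_avg:
  fixes u :: "'a::real_normed_vector \<Rightarrow> 'b::real_normed_vector" and \<phi> :: "'b \<Rightarrow>\<^sub>L real"
  assumes "linear u"
  shows "\<bar>\<phi> (u (\<Sum>k\<in>{1..n}. \<gamma> k *\<^sub>R e k))\<bar>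
    \<le> 2 * L2_set \<gamma> {1..n} * sign_avg n (\<lambda>\<rho>. \<bar>\<phi> (\<Sum>k\<in>{1..n}. \<rho> k *\<^sub>R u (e k))\<bar>)"
proof -
  define A where "A k = \<phi> (u (e k))" for k
  have "\<bar>\<phi> (u (\<Sum>k\<in>{1..n}. \<gamma> k *\<^sub>R e k))\<bar> = \<bar>\<Sum>k\<in>{1..n}. \<gamma> k * A k\<bar>"
    by (simp add: A_def linear_sum[OF assms] linear_scale[OF assms] blinfun.sum_right blinfun.scaleR_right)
  also have "\<dots> \<le> (\<Sum>k\<in>{1..n}. \<bar>\<gamma> k\<bar> * \<bar>A k\<bar>)"
    by (simp add: sum_abs[THEN order_trans] abs_mult)
  also have "\<dots> \<le> L2_set \<gamma> {1..n} * L2_set A {1..n}"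
    by (rule L2_set_mult_ineq)
  also have "\<dots> \<le> L2_set \<gamma> {1..n} * (2 * sign_avg n (\<lambda>\<rho>. \<bar>signed_sum n A \<rho>\<bar>))"
    by (intro mult_left_mono khintchine_L1 L2_set_nonneg)
  also have "(\<lambda>\<rho>. \<bar>signed_sum n A \<rho>\<bar>) = (\<lambda>\<rho>. \<bar>\<phi> (\<Sum>k\<in>{1..n}. \<rho> k *\<^sub>R u (e k))\<bar>)"
    by (simp add: signed_sum_def A_def blinfun.sum_right blinfun.scaleR_right)
  finally show ?thesis by (simp add: mult_ac)
qed

lemma sum_mult_abs_eval_le:
  fixes y :: "nat \<Rightarrow> 'b::real_normed_vector \<Rightarrow>\<^sub>L real"
  assumes "1 < q"
  shows "(\<Sum>i<m. \<bar>\<alpha> i\<bar> * \<bar>y i b\<bar>) \<le> lpnorm q m \<alpha> * (norm b * weak_norm (conj_exp q) m y)"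
proof -
  have "(\<Sum>i<m. \<bar>\<alpha> i\<bar> * \<bar>y i b\<bar>) \<le> lpnorm q m \<alpha> * lpnorm (conj_exp q) m (\<lambda>i. y i b)"
    by (rule lpnorm_holder[OF assms])
  also have "\<dots> \<le> lpnorm q m \<alpha> * (norm b * weak_norm (conj_exp q) m y)"
    by (intro mult_left_mono lpnorm_eval_le_weak_norm conj_exp_pos assms lpnorm_nonneg)
  finally show ?thesis .
qed

text \<open>Khintchine's inequality in each coordinate, followed by Hoelder's inequality inside the average.\<close>
lemma sum_abs_apply_le:
  fixes u :: "'a::real_normed_vector \<Rightarrow> 'b::real_normed_vector" and y :: "nat \<Rightarrow> 'b \<Rightarrow>\<^sub>L real"
  assumes "linear u" and "1 < q" and "0 \<le> a"
    and coords: "\<And>i. i < m \<Longrightarrow> x i = (\<Sum>k\<in>{1..n}. c i k *\<^sub>R e k)"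
    and coord_bound: "\<And>i. i < m \<Longrightarrow> L2_set (c i) {1..n} \<le> a * norm (x i)"
  shows "(\<Sum>i<m. \<bar>y i (u (x i))\<bar>)
    \<le> 2 * a * lpnorm q m (\<lambda>i. norm (x i)) * weak_norm (conj_exp q) m y
        * sign_avg n (\<lambda>\<rho>. norm (\<Sum>k\<in>{1..n}. \<rho> k *\<^sub>R u (e k)))"
proof -
  define Y where "Y \<rho> = (\<Sum>k\<in>{1..n}. \<rho> k *\<^sub>R u (e k))" for \<rho>
  define Lx W where "Lx = lpnorm q m (\<lambda>i. norm (x i))" and "W = weak_norm (conj_exp q) m y"
  have "\<bar>y i (u (x i))\<bar> \<le> 2 * a * norm (x i) * sign_avg n (\<lambda>\<rho>. \<bar>y i (Y \<rho>)\<bar>)" if "i < m" for i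
  proof -
    have "\<bar>y i (u (x i))\<bar> \<le> 2 * L2_set (c i) {1..n} * sign_avg n (\<lambda>\<rho>. \<bar>y i (Y \<rho>)\<bar>)"
      unfolding coords[OF that] Y_def by (rule abs_apply_le_sign_avg[OF \<open>linear u\<close>])
    also have "\<dots> \<le> 2 * (a * norm (x i)) * sign_avg n (\<lambda>\<rho>. \<bar>y i (Y \<rho>)\<bar>)"
      by (intro mult_right_mono mult_left_mono coord_bound that sign_avg_nonneg) simp_all
    finally show ?thesis by (simp add: mult_ac)
  qed
  then have "(\<Sum>i<m. \<bar>y i (u (x i))\<bar>) \<le> (\<Sum>i<m. 2 * a * norm (x i) * sign_avg n (\<lambda>\<rho>. \<bar>y i (Y \<rho>)\<bar>))"
    by (intro sum_mono) simp
  also have "\<dots> = 2 * a * sign_avg n (\<lambda>\<rho>. \<Sum>i<m. \<bar>norm (x i)\<bar> * \<bar>y i (Y \<rho>)\<bar>)"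
    by (simp add: sign_avg_sum sign_avg_cmult sum_distrib_left mult_ac)
  also have "\<dots> \<le> 2 * a * sign_avg n (\<lambda>\<rho>. Lx * (norm (Y \<rho>) * W))"
    unfolding Lx_def W_def using \<open>0 \<le> a\<close>
    by (intro mult_left_mono sign_avg_mono sum_mult_abs_eval_le \<open>1 < q\<close>) simp
  also have "\<dots> = 2 * a * Lx * W * sign_avg n (\<lambda>\<rho>. norm (Y \<rho>))"
    using sign_avg_cmult[of n "Lx * W" "\<lambda>\<rho>. norm (Y \<rho>)"] by (simp add: mult_ac)
  finally show ?thesis by (simp add: Lx_def W_def Y_def)
qed

lemma sign_avg_norm_le_rademacher_integral:
  "sign_avg n (\<lambda>\<rho>. norm (\<Sum>k\<in>{1..n}. \<rho> k *\<^sub>R w k))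
    \<le> sqrt (integral {0..1} (\<lambda>t. (norm (\<Sum>k\<in>{1..n}. rademacher k t *\<^sub>R w k))\<^sup>2))"
proof -
  have "depends_on_signs n (\<lambda>\<rho>. (norm (\<Sum>k\<in>{1..n}. \<rho> k *\<^sub>R w k))\<^sup>2)"
    unfolding depends_on_signs_def
  proof (intro allI impI)
    fix \<rho> \<rho>' :: "nat \<Rightarrow> real"
    assume "\<forall>i\<in>{1..n}. \<rho> i = \<rho>' i"
    then have "(\<Sum>k\<in>{1..n}. \<rho> k *\<^sub>R w k) = (\<Sum>k\<in>{1..n}. \<rho>' k *\<^sub>R w k)"
      by (intro sum.cong) auto
    then show "(norm (\<Sum>k\<in>{1..n}. \<rho> k *\<^sub>R w k))\<^sup>2 = (norm (\<Sum>k\<in>{1..n}. \<rho>' k *\<^sub>R w k))\<^sup>2"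
      by simp
  qed
  then have "integral {0..1} (\<lambda>t. (norm (\<Sum>k\<in>{1..n}. rademacher k t *\<^sub>R w k))\<^sup>2)
      = sign_avg n (\<lambda>\<rho>. (norm (\<Sum>k\<in>{1..n}. \<rho> k *\<^sub>R w k))\<^sup>2)"
    by (rule integral_rademacher_eq_sign_avg)
  then show ?thesis
    using sign_avg_abs_le_sqrt[of n "\<lambda>\<rho>. norm (\<Sum>k\<in>{1..n}. \<rho> k *\<^sub>R w k)"] by simp
qed

lemma cohen_estimate_on_l2_subspace:
  fixes u :: "'a::real_normed_vector \<Rightarrow> 'b::real_normed_vector" and y :: "nat \<Rightarrow> 'b \<Rightarrow>\<^sub>L real"
  assumes "linear u" and "1 < q" and "0 \<le> C"
    and almost_summing: "\<And>m (x :: nat \<Rightarrow> 'a).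
      sqrt (integral {0..1} (\<lambda>t. (norm (\<Sum>i\<in>{1..m}. rademacher i t *\<^sub>R u (x i)))\<^sup>2))
        \<le> C * weak_norm 2 m (\<lambda>j. x (j + 1))"
    and "subspace F" and "l2_isomorphic lam F" and "x ` {..<m} \<subseteq> F"
  shows "(\<Sum>i<m. \<bar>y i (u (x i))\<bar>)
    \<le> 2 * lam * C * lpnorm q m (\<lambda>i. norm (x i)) * weak_norm (conj_exp q) m y"
proof -
  obtain a b e c where "0 \<le> a" "0 \<le> b" "a * b \<le> lam"
    and coords: "\<And>x. x \<in> F \<Longrightarrow> x = (\<Sum>k\<in>{1..dim F}. c x k *\<^sub>R e k)"
    and coord_bound: "\<And>x. x \<in> F \<Longrightarrow> L2_set (c x) {1..dim F} \<le> a * norm x"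
    and synthesis: "\<And>\<gamma>. norm (\<Sum>k\<in>{1..dim F}. \<gamma> k *\<^sub>R e k) \<le> b * L2_set \<gamma> {1..dim F}"
    by (rule l2_isomorphic_basis[OF \<open>subspace F\<close> \<open>l2_isomorphic lam F\<close>]) (rule that; assumption)
  define Lx W where "Lx = lpnorm q m (\<lambda>i. norm (x i))" and "W = weak_norm (conj_exp q) m y"
  have "0 \<le> Lx * W"
    unfolding Lx_def W_def by (intro mult_nonneg_nonneg lpnorm_nonneg weak_norm_nonneg conj_exp_pos \<open>1 < q\<close>)
  have "sign_avg (dim F) (\<lambda>\<rho>. norm (\<Sum>k\<in>{1..dim F}. \<rho> k *\<^sub>R u (e k)))
      \<le> sqrt (integral {0..1} (\<lambda>t. (norm (\<Sum>k\<in>{1..dim F}. rademacher k t *\<^sub>R u (e k)))\<^sup>2))"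
    by (rule sign_avg_norm_le_rademacher_integral)
  also have "\<dots> \<le> C * weak_norm 2 (dim F) (\<lambda>j. e (j + 1))"
    by (rule almost_summing)
  also have "\<dots> \<le> C * b"
    by (intro mult_left_mono weak_norm_two_le[OF \<open>0 \<le> b\<close> synthesis] \<open>0 \<le> C\<close>)
  finally have avg_bound: "sign_avg (dim F) (\<lambda>\<rho>. norm (\<Sum>k\<in>{1..dim F}. \<rho> k *\<^sub>R u (e k))) \<le> C * b" .
  have "(\<Sum>i<m. \<bar>y i (u (x i))\<bar>)
      \<le> 2 * a * Lx * W * sign_avg (dim F) (\<lambda>\<rho>. norm (\<Sum>k\<in>{1..dim F}. \<rho> k *\<^sub>R u (e k)))"
    unfolding Lx_def W_def
    by (rule sum_abs_apply_le[OF \<open>linear u\<close> \<open>1 < q\<close> \<open>0 \<le> a\<close>, where c = "\<lambda>i. c (x i)"])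
      (use coords coord_bound \<open>x ` {..<m} \<subseteq> F\<close> in auto)
  also have "\<dots> = 2 * a * (Lx * W) * sign_avg (dim F) (\<lambda>\<rho>. norm (\<Sum>k\<in>{1..dim F}. \<rho> k *\<^sub>R u (e k)))"
    by (simp add: mult_ac)
  also have "\<dots> \<le> 2 * a * (Lx * W) * (C * b)"
    using \<open>0 \<le> a\<close> \<open>0 \<le> Lx * W\<close> by (intro mult_left_mono avg_bound) simp
  also have "\<dots> = 2 * (a * b) * C * (Lx * W)"
    by (simp add: mult_ac)
  also have "\<dots> \<le> 2 * lam * C * (Lx * W)"
    using \<open>a * b \<le> lam\<close> \<open>0 \<le> C\<close> \<open>0 \<le> Lx * W\<close> by (intro mult_right_mono) simp_all
  finally show ?thesis by (simp add: Lx_def W_def mult_ac)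
qed

lemma almost_summingE:
  fixes u :: "'a::real_normed_vector \<Rightarrow> 'b::real_normed_vector"
  assumes "almost_summing u"
  obtains C where "0 \<le> C" and "\<And>m (x :: nat \<Rightarrow> 'a).
      sqrt (integral {0..1} (\<lambda>t. (norm (\<Sum>i\<in>{1..m}. rademacher i t *\<^sub>R u (x i)))\<^sup>2))
        \<le> C * weak_norm 2 m (\<lambda>j. x (j + 1))"
  using assms unfolding almost_summing_def by (elim conjE exE) (rule that; blast)

lemma L2_spaceE:
  assumes "L2_space (UNIV :: 'a::real_normed_vector set)"
  obtains lam where "1 < lam" and "\<And>X :: 'a set. finite X \<Longrightarrow> \<exists>F. subspace F \<and> X \<subseteq> F \<and> l2_isomorphic lam F"
proof -
  obtain lam where "1 < lam" and L2: "\<forall>E :: 'a set. fin_dim_subspace E \<and> E \<subseteq> UNIV \<longrightarrow>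
      (\<exists>F. fin_dim_subspace F \<and> E \<subseteq> F \<and> F \<subseteq> UNIV \<and> l2_isomorphic lam F)"
    using assms unfolding L2_space_def by (elim conjE exE) (rule that; assumption)
  have "\<exists>F. subspace F \<and> X \<subseteq> F \<and> l2_isomorphic lam F" if "finite X" for X :: "'a set"
  proof -
    have "fin_dim_subspace (span X)"
      unfolding fin_dim_subspace_def using that by (intro conjI subspace_span exI[of _ X]) simp_all
    then have "\<exists>F. fin_dim_subspace F \<and> span X \<subseteq> F \<and> F \<subseteq> UNIV \<and> l2_isomorphic lam F"
      by (intro L2[rule_format] conjI subset_UNIV)
    then obtain F where F: "fin_dim_subspace F" "span X \<subseteq> F" "l2_isomorphic lam F"
      by (elim exE conjE) (rule that; assumption)
    then have "subspace F" and "X \<subseteq> F"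
      using order_trans[OF span_superset F(2)] by (simp_all add: fin_dim_subspace_def)
    with F(3) show ?thesis by blast
  qed
  with \<open>1 < lam\<close> show ?thesis by (rule that)
qed

theorem corollary3p2:
  fixes q :: ereal and u :: "'a::banach \<Rightarrow> 'b::banach"
  assumes "1 < q"
    and "L2_space (UNIV :: 'a set)"
    and "almost_summing u"
  shows "cohen_strongly_summing q u"
proof -
  obtain C where "0 \<le> C" and almost_summing: "\<And>m (x :: nat \<Rightarrow> 'a).
      sqrt (integral {0..1} (\<lambda>t. (norm (\<Sum>i\<in>{1..m}. rademacher i t *\<^sub>R u (x i)))\<^sup>2))
        \<le> C * weak_norm 2 m (\<lambda>j. x (j + 1))"
    by (rule almost_summingE[OF assms(3)]) (rule that; assumption)
  obtain lam where "1 < lam" and L2: "\<And>X :: 'a set. finite X \<Longrightarrow> \<exists>F. subspace F \<and> X \<subseteq> F \<and> l2_isomorphic lam F"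
    by (rule L2_spaceE[OF assms(2)]) (rule that; assumption)
  have "bounded_linear u"
    using assms(3) by (simp add: almost_summing_def)
  show ?thesis
    unfolding cohen_strongly_summing_def
  proof (intro conjI \<open>bounded_linear u\<close> exI[of _ "2 * lam * C"] allI)
    show "0 \<le> 2 * lam * C"
      using \<open>1 < lam\<close> \<open>0 \<le> C\<close> by simp
    fix m :: nat and x :: "nat \<Rightarrow> 'a" and y :: "nat \<Rightarrow> 'b \<Rightarrow>\<^sub>L real"
    have "finite (x ` {..<m})" by simp
    from L2[OF this] obtain F where "subspace F" "x ` {..<m} \<subseteq> F" "l2_isomorphic lam F"
      by (elim exE conjE) (rule that; assumption)
    then show "(\<Sum>i<m. \<bar>y i (u (x i))\<bar>) \<le> 2 * lam * C * lpnorm q m (\<lambda>i. norm (x i)) * weak_norm (conj_exp q) m y"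
      by (intro cohen_estimate_on_l2_subspace[OF bounded_linear.linear[OF \<open>bounded_linear u\<close>] assms(1) \<open>0 \<le> C\<close> almost_summing])
  qed
qed

end
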